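(* Suppose that for each $j=0,\dots,n$ the kernel $K_j$ belongs to $\mathrm{C}^2(0,2\pi)$, satisfies $K_j''<0$ on $(0,2\pi)$, and satisfies $K_j(0)=K_j(2\pi)=-\infty$. Let $S=S_\sigma$ be a simplex. Then the map \[\Delta_\sigma:S\to\mathbb{R}^n,\quad\Delta_\sigma(\mathbf{y})=\big(m_{\sigma(1)}(\mathbf{y})-m_{\sigma(0)}(\mathbf{y}),\dots,m_{\sigma(n)}(\mathbf{y})-m_{\sigma(n-1)}(\mathbf{y})\big)^\top\] is a homeomorphism.
   Context: Identify the torus $\mathbb{T}=\mathbb{R}/2\pi\mathbb{Z}$ with $[0,2\pi)$. The kernels $K_j$ are $2\pi$-periodic functions $\mathbb{R}\to[-\infty,\infty)$, real-valued and concave on $(0,2\pi)$, and $K_j(0)=K_j(2\pi)$ denotes the common value of $\lim_{t\downarrow0}K_j(t)$ and $\lim_{t\uparrow2\pi}K_j(t)$. For $\mathbf{y}\in\mathbb{T}^n$ put $y_0=0$, $y_{n+1}=2\pi$, $F(\mathbf{y},t)=K_0(t)+\sum_{j=1}^nK_j(t-y_j)$. For a permutation $\sigma$ of $\{1,\dots,n\}$ ($\sigma(0)=0,\sigma(n+1)=n+1$), $S_\sigma=\{\mathbf{y}:0<y_{\sigma(1)}<\dots<y_{\sigma(n)}<2\pi\}$; for $\mathbf{y}\in S_\sigma$, $m_{\sigma(k)}(\mathbf{y})=\sup_{t\in[y_{\sigma(k)},y_{\sigma(k+1)}]}F(\mathbf{y},t)$, $k=0,\dots,n$. *)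

theory Defs
  imports "HOL-Analysis.Analysis" "HOL-Library.Extended_Real"
begin

definition kernel_C2_neg :: "(real \<Rightarrow> ereal) \<Rightarrow> bool" where
  "kernel_C2_neg K \<longleftrightarrow>
     (\<exists>k1 k2. continuous_on {0<..<2*pi} k2 \<and>
        (\<forall>t\<in>{0<..<2*pi}.
           ((\<lambda>s. real_of_ereal (K s)) has_real_derivative k1 t) (at t) \<and>
           (k1 has_real_derivative k2 t) (at t) \<and> k2 t < 0))"

definition standing_kernel :: "(real \<Rightarrow> ereal) \<Rightarrow> bool" where
  "standing_kernel K \<longleftrightarrow>
     (\<forall>t. K (t + 2*pi) = K t) \<and>
     (\<forall>t\<in>{0<..<2*pi}. K t \<noteq> -\<infinity> \<and> K t \<noteq> \<infinity>) \<and>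
     concave_on {0<..<2*pi} (\<lambda>t. real_of_ereal (K t))"

definition Fsum :: "(real \<Rightarrow> ereal) \<Rightarrow> ('n::finite \<Rightarrow> real \<Rightarrow> ereal) \<Rightarrow> real^'n \<Rightarrow> real \<Rightarrow> ereal" where
  "Fsum K0 K y t = K0 t + (\<Sum>j\<in>UNIV. K j (t - y $ j))"

definition node :: "(nat \<Rightarrow> 'n::finite) \<Rightarrow> real^'n \<Rightarrow> nat \<Rightarrow> real" where
  "node \<sigma> y k = (if k = 0 then 0 else if k = CARD('n) + 1 then 2*pi else y $ \<sigma> k)"

definition simplex_sigma :: "(nat \<Rightarrow> 'n::finite) \<Rightarrow> (real^'n) set" where
  "simplex_sigma \<sigma> = {y. \<forall>k\<le>CARD('n). node \<sigma> y k < node \<sigma> y (Suc k)}"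

definition mloc :: "(real \<Rightarrow> ereal) \<Rightarrow> ('n::finite \<Rightarrow> real \<Rightarrow> ereal) \<Rightarrow> (nat \<Rightarrow> 'n)
    \<Rightarrow> real^'n \<Rightarrow> nat \<Rightarrow> ereal" where
  "mloc K0 K \<sigma> y k = (SUP t\<in>{node \<sigma> y k .. node \<sigma> y (Suc k)}. Fsum K0 K y t)"

text \<open>Delta_sigma; the k-th difference m_{sigma(k)} - m_{sigma(k-1)} (k = 1..n) is stored
  in coordinate sigma(k) of the output vector.\<close>
definition Delta :: "(real \<Rightarrow> ereal) \<Rightarrow> ('n::finite \<Rightarrow> real \<Rightarrow> ereal) \<Rightarrow> (nat \<Rightarrow> 'n)
    \<Rightarrow> real^'n \<Rightarrow> real^'n" where
  "Delta K0 K \<sigma> y = (\<chi> i. (let k = inv_into {1..CARD('n)} \<sigma> i in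
      real_of_ereal (mloc K0 K \<sigma> y k - mloc K0 K \<sigma> y (k - 1))))"

end

theory Submission
  imports Defs "HOL-Homology.Invariance_of_Domain"
begin

text \<open>The nodes x_k = y_{\<sigma>(k)} cut the circle into gaps (x_k, x_{k+1}). On each gap F(y, \<cdot>) is
  a sum of kernels tending to -\<infinity> at the ends of the gap, so m_k is attained inside it; as a
  supremum of functions jointly concave in (y, t), m_k is concave, hence continuous, on the open
  simplex. If \<Delta>(y) = \<Delta>(y'), then m_k(y') - m_k(y) does not depend on k. But if some node moves,
  say x_p moves furthest to the right, by M > 0 (otherwise exchange y and y'), then translating the
  maximisers of the gaps p - 1 and p by M and using that kernel increments strictly decrease
  (K'' < 0) gives m_p(y') - m_p(y) < m_{p-1}(y') - m_{p-1}(y); so \<Delta> is injective. Near the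
  boundary of the simplex some gap closes and its maximum tends to -\<infinity>, while a gap of positive
  length keeps a maximum bounded below; so \<Delta> is unbounded there and its image is closed. By
  invariance of domain the image is also open, hence all of \<real>^n.\<close>

lemma continuous_attains_sup_open_interval:
  fixes f :: "real \<Rightarrow> real"
  assumes "a < b" and cont: "continuous_on {a<..<b} f"
    and left: "filterlim f at_bot (at_right a)" and right: "filterlim f at_bot (at_left b)"
  obtains t where "a < t" "t < b" "\<And>s. a < s \<Longrightarrow> s < b \<Longrightarrow> f s \<le> f t"
proof -
  define c where "c = (a + b) / 2"
  have c: "a < c" "c < b" using \<open>a < b\<close> by (simp_all add: c_def)
  obtain l where l: "a < l" "\<And>s. a < s \<Longrightarrow> s < l \<Longrightarrow> f s < f c"
    using left unfolding filterlim_at_bot_dense eventually_at_right_field by blast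
  obtain u where u: "u < b" "\<And>s. u < s \<Longrightarrow> s < b \<Longrightarrow> f s < f c"
    using right unfolding filterlim_at_bot_dense eventually_at_left_field by blast
  have sub: "{min l c..max u c} \<subseteq> {a<..<b}" using l u c by auto
  obtain t where t: "t \<in> {min l c..max u c}" "\<And>s. s \<in> {min l c..max u c} \<Longrightarrow> f s \<le> f t"
    using continuous_attains_sup[of "{min l c..max u c}" f] continuous_on_subset[OF cont sub] c
    by fastforce
  have "f c \<le> f t" using t c by simp
  show thesis
  proof (rule that)
    show "a < t" "t < b" using t sub by auto
    fix s assume s: "a < s" "s < b"
    show "f s \<le> f t"
    proof (cases "s \<in> {min l c..max u c}")
      case True
      then show ?thesis using t by blast
    next
      case False
      then have "f s < f c" using s l(2) u(2) by force
      with \<open>f c \<le> f t\<close> show ?thesis by simp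
    qed
  qed
qed

lemma filterlim_at_bot_le_add_const:
  fixes f g :: "'a \<Rightarrow> real"
  assumes "filterlim f at_bot F" and "eventually (\<lambda>x. g x \<le> f x + C) F"
  shows "filterlim g at_bot F"
  unfolding filterlim_at_bot_dense
proof
  fix Z
  have "eventually (\<lambda>x. f x < Z - C) F" using assms(1) unfolding filterlim_at_bot_dense by blast
  with assms(2) show "eventually (\<lambda>x. g x < Z) F" by eventually_elim simp
qed

lemma deriv2_neg_imp_increment_decreasing:
  fixes f f' f'' :: "real \<Rightarrow> real"
  assumes f': "\<And>t. a < t \<Longrightarrow> t < b \<Longrightarrow> (f has_real_derivative f' t) (at t)"
    and f'': "\<And>t. a < t \<Longrightarrow> t < b \<Longrightarrow> (f' has_real_derivative f'' t) (at t)"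
    and neg: "\<And>t. a < t \<Longrightarrow> t < b \<Longrightarrow> f'' t < 0"
    and "a < u" "u < v" "0 < d" "v + d < b"
  shows "f (v + d) - f v < f (u + d) - f u"
proof -
  have f'_decreasing: "f' q < f' p" if "a < p" "p < q" "q < b" for p q
    by (rule DERIV_neg_imp_decreasing[OF \<open>p < q\<close>]) (use that f'' neg in force)
  show ?thesis
  proof (rule DERIV_neg_imp_decreasing[of u v "\<lambda>x. f (x + d) - f x", OF \<open>u < v\<close>])
    fix x assume "u \<le> x" "x \<le> v"
    then have x: "a < x" "x + d < b" using assms by linarith+
    have "((\<lambda>x. f (x + d)) has_real_derivative f' (x + d)) (at x)"
      using DERIV_shift[of f "f' (x + d)" x d] f' x \<open>0 < d\<close> by simp
    then have "((\<lambda>x. f (x + d) - f x) has_real_derivative f' (x + d) - f' x) (at x)"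
      using f' x \<open>0 < d\<close> by (intro DERIV_diff) auto
    moreover have "f' (x + d) < f' x" using f'_decreasing x \<open>0 < d\<close> by simp
    ultimately show "\<exists>y. ((\<lambda>x. f (x + d) - f x) has_real_derivative y) (at x) \<and> y < 0"
      by (intro exI[of _ "f' (x + d) - f' x"]) simp
  qed
qed

lemma filterlim_real_of_ereal_at_bot:
  assumes "tendsto f (-\<infinity>) F" and "eventually (\<lambda>x. \<bar>f x\<bar> \<noteq> \<infinity>) F"
  shows "filterlim (\<lambda>x. real_of_ereal (f x)) at_bot F"
  unfolding filterlim_at_bot_dense
proof
  fix Z
  have "eventually (\<lambda>x. f x < ereal Z) F" using assms(1) unfolding tendsto_MInfty by blast
  with assms(2) show "eventually (\<lambda>x. real_of_ereal (f x) < Z) F"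
  proof eventually_elim
    case (elim x)
    then show ?case by (cases "f x") simp_all
  qed
qed

lemma convex_comb_strict_mono:
  fixes a a' b b' u v :: real
  assumes "a < a'" "b < b'" "0 \<le> u" "0 \<le> v" "u + v = 1"
  shows "u * a + v * b < u * a' + v * b'"
proof (cases "v = 0")
  case False
  then have "v * b < v * b'" using assms by simp
  moreover have "u * a \<le> u * a'" using assms by (simp add: mult_left_mono)
  ultimately show ?thesis by simp
qed (use assms in simp)

definition singular_kernel :: "(real \<Rightarrow> ereal) \<Rightarrow> bool" where
  "singular_kernel K \<longleftrightarrow> standing_kernel K \<and> kernel_C2_neg K \<and> K 0 = -\<infinity> \<and>
     tendsto K (-\<infinity>) (at_right 0) \<and> tendsto K (-\<infinity>) (at_left (2*pi))"

context
  fixes K :: "real \<Rightarrow> ereal"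
  assumes K: "singular_kernel K"
begin

lemma singular_kernel_periodic: "K (t + 2*pi) = K t"
  using K by (simp add: singular_kernel_def standing_kernel_def)

lemma singular_kernel_at_0: "K 0 = -\<infinity>" and singular_kernel_at_2pi: "K (2*pi) = -\<infinity>"
  using K singular_kernel_periodic[of 0] by (simp_all add: singular_kernel_def)

lemma singular_kernel_finite: "0 < t \<Longrightarrow> t < 2*pi \<Longrightarrow> \<bar>K t\<bar> \<noteq> \<infinity>"
  using K by (auto simp: singular_kernel_def standing_kernel_def)

lemma singular_kernel_eq_ereal: "0 < t \<Longrightarrow> t < 2*pi \<Longrightarrow> K t = ereal (real_of_ereal (K t))"
  using singular_kernel_finite by (simp add: ereal_real')

lemma singular_kernel_not_PInf:
  assumes "-2*pi \<le> t" "t \<le> 2*pi"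
  shows "K t \<noteq> \<infinity>"
proof -
  consider "t = 0 \<or> t = 2*pi" | "0 < t \<and> t < 2*pi" | "-2*pi \<le> t \<and> t < 0"
    using assms by linarith
  then show ?thesis
  proof cases
    case 3
    then show ?thesis
      using singular_kernel_periodic[of t] singular_kernel_finite[of "t + 2*pi"]
        singular_kernel_at_0 by (cases "t = -2*pi") auto
  qed (use singular_kernel_at_0 singular_kernel_at_2pi singular_kernel_finite[of t] in force)+
qed

lemma singular_kernel_concave: "concave_on {0<..<2*pi} (\<lambda>t. real_of_ereal (K t))"
  using K by (simp add: singular_kernel_def standing_kernel_def)

lemma singular_kernel_increment_decreasing:
  assumes "0 < u" "u < v" "0 < d" "v + d < 2*pi"
  shows "real_of_ereal (K (v + d)) - real_of_ereal (K v) <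
    real_of_ereal (K (u + d)) - real_of_ereal (K u)"
proof -
  obtain k1 k2 where k: "\<And>t. t \<in> {0<..<2*pi} \<Longrightarrow>
      ((\<lambda>s. real_of_ereal (K s)) has_real_derivative k1 t) (at t) \<and>
      (k1 has_real_derivative k2 t) (at t) \<and> k2 t < 0"
    using K unfolding singular_kernel_def kernel_C2_neg_def by blast
  show ?thesis
    by (rule deriv2_neg_imp_increment_decreasing[of 0 "2*pi" _ k1 k2]) (use k assms in auto)
qed

lemma singular_kernel_tendsto_at_right_0:
  "filterlim (\<lambda>t. real_of_ereal (K t)) at_bot (at_right 0)"
proof (rule filterlim_real_of_ereal_at_bot)
  show "tendsto K (-\<infinity>) (at_right 0)" using K by (simp add: singular_kernel_def)
  show "eventually (\<lambda>t. \<bar>K t\<bar> \<noteq> \<infinity>) (at_right 0)"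
    unfolding eventually_at_right_field
    by (intro exI[of _ "2*pi"]) (simp add: singular_kernel_finite)
qed

lemma singular_kernel_tendsto_at_left_2pi:
  "filterlim (\<lambda>t. real_of_ereal (K t)) at_bot (at_left (2*pi))"
proof (rule filterlim_real_of_ereal_at_bot)
  show "tendsto K (-\<infinity>) (at_left (2*pi))" using K by (simp add: singular_kernel_def)
  show "eventually (\<lambda>t. \<bar>K t\<bar> \<noteq> \<infinity>) (at_left (2*pi))"
    unfolding eventually_at_left_field by (intro exI[of _ 0]) (simp add: singular_kernel_finite)
qed

end

locale kernel_family =
  fixes n :: nat and R :: "nat \<Rightarrow> real \<Rightarrow> real"
  assumes kernel_concave: "j \<le> n \<Longrightarrow> concave_on {0<..<2*pi} (R j)"
    and kernel_increment_decreasing: "j \<le> n \<Longrightarrow> 0 < u \<Longrightarrow> u < v \<Longrightarrow> 0 < d \<Longrightarrow> v + d < 2*pi \<Longrightarrow>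
      R j (v + d) - R j v < R j (u + d) - R j u"
    and kernel_tendsto_at_right_0: "j \<le> n \<Longrightarrow> filterlim (R j) at_bot (at_right 0)"
    and kernel_tendsto_at_left_2pi: "j \<le> n \<Longrightarrow> filterlim (R j) at_bot (at_left (2*pi))"
begin

lemma kernel_continuous: "j \<le> n \<Longrightarrow> continuous_on {0<..<2*pi} (R j)"
  using convex_on_continuous[of "{0<..<2*pi}" "\<lambda>s. - R j s"] kernel_concave[of j]
    continuous_on_minus[of "{0<..<2*pi}" "\<lambda>s. - R j s"]
  by (simp add: concave_on_def)

lemma kernel_increment_antimono:
  assumes "j \<le> n" "0 < u" "u \<le> v" "0 \<le> d" "v + d < 2*pi"
  shows "R j (v + d) - R j v \<le> R j (u + d) - R j u"
  using kernel_increment_decreasing[of j u v d] assms by (cases "u = v \<or> d = 0") auto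

lemma kernel_bdd_above:
  assumes "j \<le> n"
  obtains U where "\<And>s. 0 < s \<Longrightarrow> s < 2*pi \<Longrightarrow> R j s \<le> U"
proof -
  obtain t where "\<And>s. 0 < s \<Longrightarrow> s < 2*pi \<Longrightarrow> R j s \<le> R j t"
    by (rule continuous_attains_sup_open_interval[of 0 "2*pi" "R j"])
      (use kernel_continuous kernel_tendsto_at_right_0 kernel_tendsto_at_left_2pi assms in auto)
  then show thesis by (rule that)
qed

definition config :: "(nat \<Rightarrow> real) \<Rightarrow> bool" where
  "config x \<longleftrightarrow> x 0 = 0 \<and> x (Suc n) = 2*pi \<and> (\<forall>k\<le>n. x k < x (Suc k))"

text \<open>For \<open>t\<close> in the \<open>k\<close>-th gap \<open>(x k, x (k+1))\<close>, \<open>offset k j x t\<close> is the representative of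
  \<open>t - x j\<close> modulo \<open>2\<pi>\<close> in \<open>(0, 2\<pi>)\<close>.\<close>

definition offset :: "nat \<Rightarrow> nat \<Rightarrow> (nat \<Rightarrow> real) \<Rightarrow> real \<Rightarrow> real" where
  "offset k j x t = (if j \<le> k then t - x j else t - x j + 2*pi)"

definition potential :: "nat \<Rightarrow> (nat \<Rightarrow> real) \<Rightarrow> real \<Rightarrow> real" where
  "potential k x t = (\<Sum>j\<le>n. R j (offset k j x t))"

definition locmax :: "nat \<Rightarrow> (nat \<Rightarrow> real) \<Rightarrow> real" where
  "locmax k x = Sup (potential k x ` {x k<..<x (Suc k)})"

definition weak_config :: "(nat \<Rightarrow> real) \<Rightarrow> bool" where
  "weak_config x \<longleftrightarrow> x 0 = 0 \<and> x (Suc n) = 2*pi \<and> (\<forall>k\<le>n. x k \<le> x (Suc k))"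

lemma config_imp_weak_config: "config x \<Longrightarrow> weak_config x"
  by (auto simp: config_def weak_config_def less_imp_le)

lemma weak_config_le:
  assumes "weak_config x" "i \<le> j" "j \<le> Suc n"
  shows "x i \<le> x j"
  using assms(2,3)
proof (induction j)
  case (Suc j)
  then have "x j \<le> x (Suc j)" using assms(1) by (simp add: weak_config_def)
  with Suc show ?case by (cases "i = Suc j") auto
qed simp

lemma weak_config_bounds: "weak_config x \<Longrightarrow> k \<le> Suc n \<Longrightarrow> 0 \<le> x k \<and> x k \<le> 2*pi"
  using weak_config_le[of x 0 k] weak_config_le[of x k "Suc n"] by (auto simp: weak_config_def)

lemma offset_bounds:
  assumes "weak_config x" "k \<le> n" "j \<le> n" "x k < t" "t < x (Suc k)"
  shows "0 < offset k j x t" "offset k j x t < 2*pi"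
proof -
  have "0 < offset k j x t \<and> offset k j x t < 2*pi"
  proof (cases "j \<le> k")
    case True
    then have "x j \<le> x k" "0 \<le> x j" "x (Suc k) \<le> 2*pi"
      using assms weak_config_le[of x j k] weak_config_bounds[of x j]
        weak_config_bounds[of x "Suc k"] by auto
    then show ?thesis using True assms by (auto simp: offset_def)
  next
    case False
    then have "x (Suc k) \<le> x j" "x j \<le> 2*pi" "0 \<le> x k"
      using assms weak_config_le[of x "Suc k" j] weak_config_bounds[of x j]
        weak_config_bounds[of x k] by auto
    then show ?thesis using False assms by (auto simp: offset_def)
  qed
  then show "0 < offset k j x t" "offset k j x t < 2*pi" by simp_all
qed

lemma potential_le_kernel_plus_const:
  assumes "j \<le> n"
  obtains C where "\<And>k x t. config x \<Longrightarrow> k \<le> n \<Longrightarrow> x k < t \<Longrightarrow> t < x (Suc k) \<Longrightarrow>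
    potential k x t \<le> R j (offset k j x t) + C"
proof -
  have "\<forall>i. \<exists>U. i \<le> n \<longrightarrow> (\<forall>s. 0 < s \<longrightarrow> s < 2*pi \<longrightarrow> R i s \<le> U)"
    using kernel_bdd_above by metis
  then obtain U where U: "\<And>i s. i \<le> n \<Longrightarrow> 0 < s \<Longrightarrow> s < 2*pi \<Longrightarrow> R i s \<le> U i"
    by metis
  show thesis
  proof (rule that[of "\<Sum>i\<in>{..n} - {j}. U i"])
    fix k x t assume gap: "config x" "k \<le> n" "x k < t" "t < x (Suc k)"
    note bounds = offset_bounds[OF config_imp_weak_config[OF gap(1)] gap(2) _ gap(3,4)]
    have "potential k x t = R j (offset k j x t) + (\<Sum>i\<in>{..n} - {j}. R i (offset k i x t))"
      unfolding potential_def using assms by (simp add: sum.remove)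
    also have "\<dots> \<le> R j (offset k j x t) + (\<Sum>i\<in>{..n} - {j}. U i)"
      by (intro add_left_mono sum_mono) (use U bounds in auto)
    finally show "potential k x t \<le> R j (offset k j x t) + (\<Sum>i\<in>{..n} - {j}. U i)" .
  qed
qed

lemma potential_continuous:
  assumes "config x" "k \<le> n"
  shows "continuous_on {x k<..<x (Suc k)} (potential k x)"
  unfolding potential_def
proof (intro continuous_on_sum)
  fix j assume j: "j \<in> {..n}"
  have offset: "continuous_on {x k<..<x (Suc k)} (offset k j x)"
    unfolding offset_def by (cases "j \<le> k") (auto intro!: continuous_intros)
  show "continuous_on {x k<..<x (Suc k)} (\<lambda>t. R j (offset k j x t))"
    by (rule continuous_on_compose2[OF kernel_continuous[of j] offset])
      (use j offset_bounds[OF config_imp_weak_config[OF assms(1)] assms(2)] in auto)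
qed

lemma potential_tendsto_at_right:
  assumes "config x" "k \<le> n"
  shows "filterlim (potential k x) at_bot (at_right (x k))"
proof -
  obtain C where C: "\<And>t. x k < t \<Longrightarrow> t < x (Suc k) \<Longrightarrow> potential k x t \<le> R k (t - x k) + C"
    using potential_le_kernel_plus_const[OF assms(2)] assms by (metis offset_def order_refl)
  have "filterlim (\<lambda>t. R k (t - x k)) at_bot (at_right (x k))"
    using kernel_tendsto_at_right_0[OF assms(2)]
    by (simp add: at_right_to_0[of "x k"] filterlim_filtermap)
  moreover have "eventually (\<lambda>t. potential k x t \<le> R k (t - x k) + C) (at_right (x k))"
    unfolding eventually_at_right_field using assms C by (auto simp: config_def)
  ultimately show ?thesis by (rule filterlim_at_bot_le_add_const)
qed

lemma potential_tendsto_at_left: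
  assumes "config x" "k \<le> n"
  shows "filterlim (potential k x) at_bot (at_left (x (Suc k)))"
proof -
  define j where "j = (if k < n then Suc k else 0)"
  have j: "j \<le> n" using assms by (simp add: j_def)
  have "offset k j x t = t - x (Suc k) + 2*pi" for t
    using assms by (auto simp: offset_def j_def config_def)
  then obtain C where C: "\<And>t. x k < t \<Longrightarrow> t < x (Suc k) \<Longrightarrow>
      potential k x t \<le> R j (t - x (Suc k) + 2*pi) + C"
    using potential_le_kernel_plus_const[OF j] assms by metis
  have "filterlim (\<lambda>s. R j (s + 2*pi)) at_bot (at_left 0)"
    using kernel_tendsto_at_left_2pi[OF j]
    by (simp add: at_left_to_0[of "2*pi"] filterlim_filtermap)
  then have "filterlim (\<lambda>t. R j (t - x (Suc k) + 2*pi)) at_bot (at_left (x (Suc k)))"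
    by (simp add: at_left_to_0[of "x (Suc k)"] filterlim_filtermap)
  moreover have
    "eventually (\<lambda>t. potential k x t \<le> R j (t - x (Suc k) + 2*pi) + C) (at_left (x (Suc k)))"
    unfolding eventually_at_left_field using assms C by (auto simp: config_def)
  ultimately show ?thesis by (rule filterlim_at_bot_le_add_const)
qed

lemma locmax_attained:
  assumes "config x" "k \<le> n"
  obtains t where "x k < t" "t < x (Suc k)" "locmax k x = potential k x t"
    "\<And>s. x k < s \<Longrightarrow> s < x (Suc k) \<Longrightarrow> potential k x s \<le> potential k x t"
proof -
  have "x k < x (Suc k)" using assms by (simp add: config_def)
  then obtain t where t: "x k < t" "t < x (Suc k)"
      "\<And>s. x k < s \<Longrightarrow> s < x (Suc k) \<Longrightarrow> potential k x s \<le> potential k x t"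
    using continuous_attains_sup_open_interval potential_continuous potential_tendsto_at_right
      potential_tendsto_at_left assms by metis
  moreover have "locmax k x = potential k x t"
    unfolding locmax_def by (rule cSup_eq_maximum) (use t in auto)
  ultimately show thesis using that by blast
qed

lemma potential_le_locmax:
  "config x \<Longrightarrow> k \<le> n \<Longrightarrow> x k < t \<Longrightarrow> t < x (Suc k) \<Longrightarrow> potential k x t \<le> locmax k x"
  by (metis locmax_attained)

end

context kernel_family
begin

lemma config_convex_comb:
  assumes "config x" "config x'" "0 \<le> u" "0 \<le> v" "u + v = 1"
  shows "config (\<lambda>i. u * x i + v * x' i)"
proof -
  have "u * (2*pi) + v * (2*pi) = 2*pi" using assms(5) by (metis distrib_right mult_1)
  then show ?thesis
    using assms convex_comb_strict_mono[OF _ _ assms(3-5)] by (auto simp: config_def)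
qed

lemma locmax_concave:
  assumes x: "config x" and x': "config x'" and uv: "0 \<le> u" "0 \<le> v" "u + v = 1" and k: "k \<le> n"
  shows "u * locmax k x + v * locmax k x' \<le> locmax k (\<lambda>i. u * x i + v * x' i)"
proof -
  have wx: "weak_config x" "weak_config x'" using x x' by (simp_all add: config_imp_weak_config)
  define z where "z = (\<lambda>i. u * x i + v * x' i)"
  obtain t where t: "x k < t" "t < x (Suc k)" "locmax k x = potential k x t"
    using locmax_attained[OF x k] by metis
  obtain t' where t': "x' k < t'" "t' < x' (Suc k)" "locmax k x' = potential k x' t'"
    using locmax_attained[OF x' k] by metis
  have v: "v = 1 - u" using uv by simp
  have offset_comb:
    "offset k j z (u * t + v * t') = u * offset k j x t + v * offset k j x' t'" for j
    unfolding offset_def z_def v by (simp add: algebra_simps)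
  have "u * potential k x t + v * potential k x' t' =
      (\<Sum>j\<le>n. u * R j (offset k j x t) + v * R j (offset k j x' t'))"
    unfolding potential_def by (simp add: sum.distrib sum_distrib_left)
  also have "\<dots> \<le> (\<Sum>j\<le>n. R j (offset k j z (u * t + v * t')))"
  proof (intro sum_mono)
    fix j assume j: "j \<in> {..n}"
    have "offset k j x t \<in> {0<..<2*pi}" "offset k j x' t' \<in> {0<..<2*pi}"
      using offset_bounds[OF wx(1) k _ t(1,2)] offset_bounds[OF wx(2) k _ t'(1,2)] j by auto
    then show "u * R j (offset k j x t) + v * R j (offset k j x' t') \<le>
        R j (offset k j z (u * t + v * t'))"
      using kernel_concave[of j] j uv unfolding concave_on_iff offset_comb by auto
  qed
  also have "\<dots> \<le> locmax k z"
    unfolding potential_def[symmetric] z_def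
    by (intro potential_le_locmax config_convex_comb convex_comb_strict_mono)
      (use x x' uv k t t' in auto)
  finally show ?thesis using t t' unfolding z_def by simp
qed

lemma potential_shift:
  "potential k x' (t + c) - potential k x t =
    (\<Sum>j\<le>n. R j (offset k j x t + (c - (x' j - x j))) - R j (offset k j x t))"
proof -
  have "offset k j x' (t + c) = offset k j x t + (c - (x' j - x j))" for j
    by (simp add: offset_def)
  then show ?thesis unfolding potential_def by (simp add: sum_subtractf)
qed

text \<open>Both differences of local maxima are compared with sums of kernel increments of lengths
  \<open>M - (x' j - x j) \<ge> 0\<close>, taken further along the circle in gap \<open>p\<close>; the increment of the kernel
  at the fixed node \<open>0\<close> has positive length, which makes the inequality strict.\<close>

lemma locmax_increment_lt:
  assumes x: "config x" and x': "config x'" and p: "p \<le> n"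
    and max: "\<And>j. j \<le> n \<Longrightarrow> x' j - x j \<le> x' p - x p" and pos: "0 < x' p - x p"
  shows "0 < p" "locmax p x' - locmax p x < locmax (p - 1) x' - locmax (p - 1) x"
proof -
  have wx: "weak_config x" "weak_config x'" using x x' by (simp_all add: config_imp_weak_config)
  define M where "M = x' p - x p"
  have w0: "x' 0 - x 0 = 0" and wS: "x' (Suc n) - x (Suc n) = 0"
    using x x' by (simp_all add: config_def)
  show "0 < p" using w0 pos by (cases p) auto
  then have Sp: "Suc (p - 1) = p" by simp
  have p1: "p - 1 \<le> n" using p by simp
  have wSp: "x' (Suc p) - x (Suc p) \<le> M"
  proof (cases "p = n")
    case True
    then show ?thesis using wS pos by (simp add: M_def)
  next
    case False
    then show ?thesis using max[of "Suc p"] p by (simp add: M_def)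
  qed
  obtain a where a: "x' p < a" "a < x' (Suc p)" "locmax p x' = potential p x' a"
    using locmax_attained[OF x' p] by metis
  obtain b where b: "x (p - 1) < b" "b < x p" "locmax (p - 1) x = potential (p - 1) x b"
    using locmax_attained[OF x p1] Sp by metis
  define s where "s = a - M"
  have s: "x p < s" "s < x (Suc p)" using a wSp by (auto simp: s_def M_def)
  have bM: "x' (p - 1) < b + M" "b + M < x' (Suc (p - 1))"
    using b max[OF p1] Sp by (auto simp: M_def)
  define inc where
    "inc k t j = R j (offset k j x t + (M - (x' j - x j))) - R j (offset k j x t)" for k t j
  have "locmax p x' - locmax p x \<le> potential p x' (s + M) - potential p x s"
    using a potential_le_locmax[OF x p s] by (simp add: s_def)
  also have "\<dots> = (\<Sum>j\<le>n. inc p s j)"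
    unfolding potential_shift inc_def ..
  also have "\<dots> < (\<Sum>j\<le>n. inc (p - 1) b j)"
  proof (rule sum_strict_mono_ex1)
    have "inc p s j \<le> inc (p - 1) b j \<and> (j = 0 \<longrightarrow> inc p s j < inc (p - 1) b j)" if j: "j \<le> n" for j
    proof (cases "j = p")
      case False
      have lo: "0 < offset (p - 1) j x b"
        using offset_bounds[OF wx(1) p1 j b(1)] b(2) Sp by simp
      have hi: "offset p j x s + (M - (x' j - x j)) < 2*pi"
        using offset_bounds[OF wx(2) p j a(1,2)]
        by (simp add: offset_def s_def M_def split: if_splits)
      have lt: "offset (p - 1) j x b < offset p j x s"
        using False s b \<open>0 < p\<close> by (auto simp: offset_def)
      have "0 \<le> M - (x' j - x j)" using max[OF j] by (simp add: M_def)
      moreover have "j = 0 \<longrightarrow> 0 < M - (x' j - x j)" using w0 pos by (simp add: M_def)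
      ultimately show ?thesis
        using kernel_increment_antimono[OF j lo less_imp_le[OF lt] _ hi]
          kernel_increment_decreasing[OF j lo lt _ hi]
        by (auto simp: inc_def)
    qed (use \<open>0 < p\<close> in \<open>simp add: inc_def M_def\<close>)
    then show "\<forall>j\<in>{..n}. inc p s j \<le> inc (p - 1) b j" "\<exists>j\<in>{..n}. inc p s j < inc (p - 1) b j"
      by auto
  qed simp
  also have "\<dots> = potential (p - 1) x' (b + M) - potential (p - 1) x b"
    unfolding potential_shift inc_def ..
  also have "\<dots> \<le> locmax (p - 1) x' - locmax (p - 1) x"
    using b potential_le_locmax[OF x' p1 bM] by simp
  finally show "locmax p x' - locmax p x < locmax (p - 1) x' - locmax (p - 1) x" .
qed

lemma locmax_increments_const_imp_eq:
  assumes x: "config x" and x': "config x'"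
    and const: "\<And>k. k \<le> n \<Longrightarrow> locmax k x' - locmax k x = locmax 0 x' - locmax 0 x"
  shows "\<And>j. j \<le> n \<Longrightarrow> x' j = x j"
proof (rule ccontr)
  fix j assume j: "j \<le> n" "x' j \<noteq> x j"
  have argmax: "\<exists>p\<le>n. \<forall>i\<le>n. f i \<le> f p" for f :: "nat \<Rightarrow> real"
  proof -
    obtain p where "p \<le> n" "f p = Max (f ` {..n})" using Max_in[of "f ` {..n}"] by fastforce
    then show ?thesis by (metis Max_ge atMost_iff finite_atMost finite_imageI imageI)
  qed
  consider "x j < x' j" | "x' j < x j" using j(2) by linarith
  then show False
  proof cases
    case 1
    obtain p where p: "p \<le> n" "\<And>i. i \<le> n \<Longrightarrow> x' i - x i \<le> x' p - x p"
      using argmax[of "\<lambda>i. x' i - x i"] by blast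
    have "0 < x' p - x p" using p(2)[OF j(1)] 1 by simp
    then show False
      using locmax_increment_lt[OF x x' p] const[OF p(1)] const[of "p - 1"] p(1) by fastforce
  next
    case 2
    obtain p where p: "p \<le> n" "\<And>i. i \<le> n \<Longrightarrow> x i - x' i \<le> x p - x' p"
      using argmax[of "\<lambda>i. x i - x' i"] by blast
    have "0 < x p - x' p" using p(2)[OF j(1)] 2 by simp
    then show False
      using locmax_increment_lt[OF x' x p] const[OF p(1)] const[of "p - 1"] p(1) by fastforce
  qed
qed

end

context kernel_family
begin

lemma weak_config_limit:
  assumes X: "\<And>m. config (X m)" and lim: "\<And>i. i \<le> Suc n \<Longrightarrow> (\<lambda>m. X m i) \<longlonglongrightarrow> z i"
  shows "weak_config z"
proof -
  have "(\<lambda>m. X m 0) = (\<lambda>m. 0)" "(\<lambda>m. X m (Suc n)) = (\<lambda>m. 2*pi)"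
    using X by (simp_all add: config_def)
  then have "z 0 = 0" "z (Suc n) = 2*pi"
    using LIMSEQ_unique[OF lim[of 0]] LIMSEQ_unique[OF lim[of "Suc n"]] by auto
  moreover have "z k \<le> z (Suc k)" if "k \<le> n" for k
    by (rule LIMSEQ_le[OF lim lim]) (use X that in \<open>auto simp: config_def less_imp_le\<close>)
  ultimately show ?thesis by (simp add: weak_config_def)
qed

lemma locmax_eventually_ge:
  assumes X: "\<And>m. config (X m)" and lim: "\<And>i. i \<le> Suc n \<Longrightarrow> (\<lambda>m. X m i) \<longlonglongrightarrow> z i"
    and k: "k \<le> n" and gap: "z k < z (Suc k)"
  obtains L where "eventually (\<lambda>m. L \<le> locmax k (X m)) sequentially"
proof -
  define t where "t = (z k + z (Suc k)) / 2"
  have t: "z k < t" "t < z (Suc k)" using gap by (simp_all add: t_def)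
  have "(\<lambda>m. potential k (X m) t) \<longlonglongrightarrow> potential k z t"
    unfolding potential_def
  proof (intro tendsto_sum)
    fix j assume j: "j \<in> {..n}"
    have "offset k j z t \<in> {0<..<2*pi}"
      using offset_bounds[OF weak_config_limit[OF X lim] k _ t] j by simp
    then have "isCont (R j) (offset k j z t)"
      using kernel_continuous[of j] j by (simp add: continuous_on_eq_continuous_at)
    moreover have "(\<lambda>m. offset k j (X m) t) \<longlonglongrightarrow> offset k j z t"
      unfolding offset_def using lim[of j] j by (auto intro!: tendsto_intros)
    ultimately show "(\<lambda>m. R j (offset k j (X m) t)) \<longlonglongrightarrow> R j (offset k j z t)"
      by (rule isCont_tendsto_compose)
  qed
  then have "eventually (\<lambda>m. potential k z t - 1 < potential k (X m) t) sequentially"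
    by (rule order_tendstoD) simp
  moreover have "eventually (\<lambda>m. X m k < t) sequentially"
    using order_tendstoD(2)[OF lim t(1)] k by simp
  moreover have "eventually (\<lambda>m. t < X m (Suc k)) sequentially"
    using order_tendstoD(1)[OF lim t(2)] k by simp
  ultimately have "eventually (\<lambda>m. potential k z t - 1 \<le> locmax k (X m)) sequentially"
    by eventually_elim (use potential_le_locmax[OF X k] in fastforce)
  then show thesis by (rule that)
qed

lemma locmax_le_if_gap_small:
  assumes k: "k \<le> n"
  obtains \<delta> where "\<delta> > 0" "\<And>x. config x \<Longrightarrow> x (Suc k) - x k < \<delta> \<Longrightarrow> locmax k x \<le> B"
proof -
  obtain C where C: "\<And>x t. config x \<Longrightarrow> x k < t \<Longrightarrow> t < x (Suc k) \<Longrightarrow>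
      potential k x t \<le> R k (t - x k) + C"
    using potential_le_kernel_plus_const[OF k] k by (metis offset_def order_refl)
  have "eventually (\<lambda>s. R k s < B - C) (at_right 0)"
    using kernel_tendsto_at_right_0[OF k] by (simp add: filterlim_at_bot_dense)
  then obtain \<delta> where \<delta>: "\<delta> > 0" "\<And>s. 0 < s \<Longrightarrow> s < \<delta> \<Longrightarrow> R k s < B - C"
    unfolding eventually_at_right_field by blast
  show thesis
  proof (rule that[OF \<delta>(1)])
    fix x assume x: "config x" "x (Suc k) - x k < \<delta>"
    obtain t where t: "x k < t" "t < x (Suc k)" "locmax k x = potential k x t"
      using locmax_attained[OF x(1) k] by metis
    then show "locmax k x \<le> B" using C[OF x(1) t(1,2)] \<delta>(2)[of "t - x k"] x(2) by simp
  qed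
qed

lemma locmax_telescope:
  assumes "\<And>i. 0 < i \<Longrightarrow> i \<le> k \<Longrightarrow> \<bar>locmax i x - locmax (i - 1) x\<bar> \<le> C"
  shows "\<bar>locmax k x - locmax 0 x\<bar> \<le> real k * C"
  using assms
proof (induction k)
  case (Suc k)
  have "\<bar>locmax (Suc k) x - locmax k x\<bar> \<le> C" using Suc.prems[of "Suc k"] by simp
  moreover have "\<bar>locmax k x - locmax 0 x\<bar> \<le> real k * C" using Suc by simp
  ultimately show ?case by (simp add: algebra_simps)
qed simp

lemma locmax_differences_unbounded:
  assumes X: "\<And>m. config (X m)" and lim: "\<And>i. i \<le> Suc n \<Longrightarrow> (\<lambda>m. X m i) \<longlonglongrightarrow> z i"
    and k: "k \<le> n" "z k = z (Suc k)"
  shows "\<not> (\<forall>m i. 0 < i \<longrightarrow> i \<le> n \<longrightarrow> \<bar>locmax i (X m) - locmax (i - 1) (X m)\<bar> \<le> C)"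
proof
  assume bdd: "\<forall>m i. 0 < i \<longrightarrow> i \<le> n \<longrightarrow> \<bar>locmax i (X m) - locmax (i - 1) (X m)\<bar> \<le> C"
  have z: "weak_config z" by (rule weak_config_limit[OF X lim])
  have "\<exists>l\<le>n. z l < z (Suc l)"
  proof (rule ccontr)
    assume "\<not> ?thesis"
    then have down: "z (Suc l) \<le> z l" if "l \<le> n" for l
      using that by (simp add: not_less)
    have "z l \<le> 0" if "l \<le> Suc n" for l
      using that
    proof (induction l)
      case (Suc l)
      then show ?case using down[of l] by simp
    qed (use z in \<open>simp add: weak_config_def\<close>)
    from this[of "Suc n"] show False using z pi_gt_zero by (simp add: weak_config_def)
  qed
  then obtain l where l: "l \<le> n" "z l < z (Suc l)" by blast
  obtain L where L: "eventually (\<lambda>m. L \<le> locmax l (X m)) sequentially"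
    using locmax_eventually_ge[OF X lim l] .
  obtain \<delta> where \<delta>: "\<delta> > 0" "\<And>x. config x \<Longrightarrow> x (Suc k) - x k < \<delta> \<Longrightarrow>
      locmax k x \<le> L - real (k + l) * C - 1"
    using locmax_le_if_gap_small[OF k(1)] by blast
  have "(\<lambda>m. X m (Suc k) - X m k) \<longlonglongrightarrow> z (Suc k) - z k"
    using lim[of "Suc k"] lim[of k] k(1) by (intro tendsto_diff) simp_all
  then have "eventually (\<lambda>m. X m (Suc k) - X m k < \<delta>) sequentially"
    using k \<delta>(1) by (intro order_tendstoD) simp_all
  with L have "eventually (\<lambda>m. L \<le> locmax l (X m) \<and> X m (Suc k) - X m k < \<delta>) sequentially"
    by (rule eventually_conj)
  then obtain m where m: "L \<le> locmax l (X m)" "X m (Suc k) - X m k < \<delta>"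
    unfolding eventually_sequentially by blast
  have "\<bar>locmax k (X m) - locmax 0 (X m)\<bar> \<le> real k * C"
    "\<bar>locmax l (X m) - locmax 0 (X m)\<bar> \<le> real l * C"
    using bdd k(1) l(1) by (auto intro!: locmax_telescope)
  moreover have "real (k + l) * C = real k * C + real l * C" by (simp add: distrib_right)
  ultimately show False using m \<delta>(2)[OF X m(2)] by linarith
qed

end

locale circle_kernels =
  fixes K0 :: "real \<Rightarrow> ereal" and K :: "'n::finite \<Rightarrow> real \<Rightarrow> ereal" and \<sigma> :: "nat \<Rightarrow> 'n"
  assumes singular_K0: "singular_kernel K0" and singular_K: "\<And>j. singular_kernel (K j)"
    and perm: "bij_betw \<sigma> {1..CARD('n)} UNIV"
begin

text \<open>Re-indexing the kernels along the nodes absorbs the permutation: \<open>node \<sigma> y k\<close> is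
  \<open>y\<^sub>\<sigma>\<^sub>(\<^sub>k\<^sub>)\<close>, which carries the kernel \<open>kern k\<close>.\<close>

definition kern :: "nat \<Rightarrow> real \<Rightarrow> ereal" where
  "kern k = (if k = 0 then K0 else K (\<sigma> k))"

lemma singular_kern: "singular_kernel (kern k)"
  by (simp add: kern_def singular_K0 singular_K)

sublocale kernel_family "CARD('n)" "\<lambda>k s. real_of_ereal (kern k s)"
  by unfold_locales (simp_all add: singular_kernel_concave singular_kernel_increment_decreasing
      singular_kernel_tendsto_at_right_0 singular_kernel_tendsto_at_left_2pi singular_kern)

lemma node_0: "node \<sigma> y 0 = 0"
  by (simp add: node_def)

lemma node_Suc_card: "node \<sigma> y (Suc CARD('n)) = 2*pi"
  by (simp add: node_def)

lemma node_nth: "k \<in> {1..CARD('n)} \<Longrightarrow> node \<sigma> y k = y $ \<sigma> k"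
  by (auto simp: node_def)

lemma simplex_iff_config: "y \<in> simplex_sigma \<sigma> \<longleftrightarrow> config (node \<sigma> y)"
  by (simp add: simplex_sigma_def config_def node_0 node_Suc_card)

lemma Fsum_eq_sum_kern: "Fsum K0 K y t = (\<Sum>k\<le>CARD('n). kern k (t - node \<sigma> y k))"
proof -
  have "(\<Sum>j\<in>UNIV. K j (t - y $ j)) = (\<Sum>k\<in>{1..CARD('n)}. kern k (t - node \<sigma> y k))"
    using sum.reindex_bij_betw[OF perm, of "\<lambda>j. K j (t - y $ j)"]
    by (simp add: kern_def node_nth)
  moreover have "{..CARD('n)} = insert 0 {1..CARD('n)}" by auto
  ultimately show ?thesis by (simp add: Fsum_def kern_def node_0)
qed

lemma Fsum_in_gap:
  assumes "y \<in> simplex_sigma \<sigma>" "k \<le> CARD('n)" "node \<sigma> y k < t" "t < node \<sigma> y (Suc k)"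
  shows "Fsum K0 K y t = ereal (potential k (node \<sigma> y) t)"
proof -
  have "kern j (t - node \<sigma> y j) = ereal (real_of_ereal (kern j (offset k j (node \<sigma> y) t)))"
    if j: "j \<le> CARD('n)" for j
  proof -
    have "weak_config (node \<sigma> y)"
      using assms(1) by (simp add: simplex_iff_config config_imp_weak_config)
    then have "0 < offset k j (node \<sigma> y) t" "offset k j (node \<sigma> y) t < 2*pi"
      using offset_bounds assms(2-4) j by simp_all
    moreover have "kern j (t - node \<sigma> y j) = kern j (offset k j (node \<sigma> y) t)"
      using singular_kernel_periodic[OF singular_kern, of j "t - node \<sigma> y j"]
      by (simp add: offset_def)
    ultimately show ?thesis using singular_kernel_eq_ereal[OF singular_kern] by simp
  qed
  then show ?thesis by (simp add: Fsum_eq_sum_kern potential_def)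
qed

lemma Fsum_at_node:
  assumes "y \<in> simplex_sigma \<sigma>" "k \<le> Suc CARD('n)"
  shows "Fsum K0 K y (node \<sigma> y k) = -\<infinity>"
proof -
  define x where "x = node \<sigma> y"
  have x: "weak_config x"
    using assms(1) by (simp add: simplex_iff_config config_imp_weak_config x_def)
  define j where "j = (if k = Suc CARD('n) then 0 else k)"
  have j: "j \<le> CARD('n)" "kern j (x k - x j) = -\<infinity>"
    using assms(2) x singular_kernel_at_0[OF singular_kern] singular_kernel_at_2pi[OF singular_kern]
    by (auto simp: j_def weak_config_def)
  have "kern i (x k - x i) \<noteq> \<infinity>" if "i \<le> CARD('n)" for i
    using singular_kernel_not_PInf[OF singular_kern] weak_config_bounds[OF x, of i]
      weak_config_bounds[OF x, of k] that assms(2) by simp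
  then have "(\<Sum>i\<in>{..CARD('n)} - {j}. kern i (x k - x i)) \<noteq> \<infinity>"
    by (simp add: sum_Pinfty)
  then show ?thesis
    using j by (simp add: Fsum_eq_sum_kern sum.remove[of _ j] flip: x_def)
qed

lemma mloc_eq_locmax:
  assumes y: "y \<in> simplex_sigma \<sigma>" and k: "k \<le> CARD('n)"
  shows "mloc K0 K \<sigma> y k = ereal (locmax k (node \<sigma> y))"
proof -
  define x where "x = node \<sigma> y"
  have x: "config x" using y by (simp add: simplex_iff_config x_def)
  obtain t where t: "x k < t" "t < x (Suc k)" "locmax k x = potential k x t"
    using locmax_attained[OF x k] by metis
  have "Fsum K0 K y s \<le> ereal (locmax k x)" if "s \<in> {x k..x (Suc k)}" for s
  proof (cases "s = x k \<or> s = x (Suc k)")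
    case True
    then show ?thesis using Fsum_at_node[OF y] k by (auto simp: x_def)
  next
    case False
    then show ?thesis
      using that Fsum_in_gap[OF y k] potential_le_locmax[OF x k] by (auto simp: x_def)
  qed
  moreover have "Fsum K0 K y t = ereal (locmax k x)"
    using Fsum_in_gap[OF y k] t by (simp add: x_def)
  ultimately have "(SUP s\<in>{x k..x (Suc k)}. Fsum K0 K y s) = ereal (locmax k x)"
    using t by (intro antisym SUP_least) (auto intro!: SUP_upper2[of t])
  then show ?thesis by (simp add: mloc_def x_def)
qed

definition node_index :: "'n \<Rightarrow> nat" where
  "node_index i = inv_into {1..CARD('n)} \<sigma> i"

lemma node_index_bounds: "node_index i \<in> {1..CARD('n)}"
  using perm inv_into_into[of i \<sigma> "{1..CARD('n)}"] by (simp add: node_index_def bij_betw_def)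

lemma node_index_\<sigma>: "k \<in> {1..CARD('n)} \<Longrightarrow> node_index (\<sigma> k) = k"
  using perm by (simp add: node_index_def bij_betw_def)

lemma \<sigma>_node_index: "\<sigma> (node_index i) = i"
  using perm f_inv_into_f[of i \<sigma> "{1..CARD('n)}"] by (simp add: bij_betw_def node_index_def)

lemma Delta_eq_locmax_differences:
  assumes "y \<in> simplex_sigma \<sigma>"
  shows "Delta K0 K \<sigma> y =
    (\<chi> i. locmax (node_index i) (node \<sigma> y) - locmax (node_index i - 1) (node \<sigma> y))"
  unfolding Delta_def vec_eq_iff
proof
  fix i
  have "node_index i \<le> CARD('n)" "node_index i - 1 \<le> CARD('n)"
    using node_index_bounds[of i] by auto
  then show "(\<chi> i. let k = inv_into {1..CARD('n)} \<sigma> i in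
        real_of_ereal (mloc K0 K \<sigma> y k - mloc K0 K \<sigma> y (k - 1))) $ i =
      (\<chi> i. locmax (node_index i) (node \<sigma> y) - locmax (node_index i - 1) (node \<sigma> y)) $ i"
    using mloc_eq_locmax[OF assms] unfolding node_index_def by (simp add: Let_def)
qed

lemma Delta_nth:
  assumes "y \<in> simplex_sigma \<sigma>" "k \<in> {1..CARD('n)}"
  shows "Delta K0 K \<sigma> y $ \<sigma> k = locmax k (node \<sigma> y) - locmax (k - 1) (node \<sigma> y)"
  using assms by (simp add: Delta_eq_locmax_differences node_index_\<sigma>)

end

context circle_kernels
begin

lemma node_convex_comb:
  assumes "u + v = 1"
  shows "node \<sigma> (u *\<^sub>R y + v *\<^sub>R y') = (\<lambda>k. u * node \<sigma> y k + v * node \<sigma> y' k)"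
proof -
  have "u * (2*pi) + v * (2*pi) = 2*pi" using assms by (metis distrib_right mult_1)
  then show ?thesis by (auto simp: node_def)
qed

lemma convex_simplex: "convex (simplex_sigma \<sigma>)"
  unfolding convex_def by (simp add: simplex_iff_config node_convex_comb config_convex_comb)

lemma open_simplex: "open (simplex_sigma \<sigma>)"
proof -
  have "continuous_on UNIV (\<lambda>y::real^'n. node \<sigma> y k)" for k
    unfolding node_def by (cases "k = 0"; cases "k = CARD('n) + 1") (auto intro!: continuous_intros)
  then have "open (\<Inter>k\<in>{..CARD('n)}. {y. node \<sigma> y k < node \<sigma> y (Suc k)})"
    by (intro open_INT finite_atMost ballI open_Collect_less)
  moreover have "simplex_sigma \<sigma> = (\<Inter>k\<in>{..CARD('n)}. {y. node \<sigma> y k < node \<sigma> y (Suc k)})"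
    by (auto simp: simplex_sigma_def)
  ultimately show ?thesis by simp
qed

lemma simplex_nonempty: "simplex_sigma \<sigma> \<noteq> {}"
proof -
  define y :: "real^'n" where "y = (\<chi> i. 2*pi * real (node_index i) / real (Suc CARD('n)))"
  have node_y: "node \<sigma> y k = 2*pi * real k / real (Suc CARD('n))" if k: "k \<le> Suc CARD('n)" for k
  proof -
    consider "k = 0" | "k = Suc CARD('n)" | "k \<in> {1..CARD('n)}"
      using k by (cases "k = 0"; cases "k = Suc CARD('n)") auto
    then show ?thesis
      by cases (simp_all add: node_0 node_Suc_card node_nth node_index_\<sigma> y_def)
  qed
  have "node \<sigma> y k < node \<sigma> y (Suc k)" if "k \<le> CARD('n)" for k
    using that by (simp add: node_y divide_strict_right_mono)
  then have "config (node \<sigma> y)"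
    by (simp add: config_def node_0 node_Suc_card)
  then show ?thesis by (auto simp: simplex_iff_config)
qed

lemma simplex_subset_cbox: "simplex_sigma \<sigma> \<subseteq> cbox 0 (\<chi> i. 2*pi)"
proof
  fix y assume "y \<in> simplex_sigma \<sigma>"
  then have y: "weak_config (node \<sigma> y)" by (simp add: simplex_iff_config config_imp_weak_config)
  show "y \<in> cbox 0 (\<chi> i. 2*pi)"
    unfolding mem_box_cart
  proof
    fix i
    have "node_index i \<in> {1..CARD('n)}" "\<sigma> (node_index i) = i"
      by (rule node_index_bounds, rule \<sigma>_node_index)
    then show "0 $ i \<le> y $ i \<and> y $ i \<le> (\<chi> i. 2*pi) $ i"
      using weak_config_bounds[OF y, of "node_index i"] node_nth[of "node_index i" y] by auto
  qed
qed

lemma continuous_on_locmax_node: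
  assumes "k \<le> CARD('n)"
  shows "continuous_on (simplex_sigma \<sigma>) (\<lambda>y. locmax k (node \<sigma> y))"
proof -
  have "concave_on (simplex_sigma \<sigma>) (\<lambda>y. locmax k (node \<sigma> y))"
    unfolding concave_on_iff
    using convex_simplex locmax_concave[OF _ _ _ _ _ assms]
    by (simp add: simplex_iff_config node_convex_comb)
  then have "continuous_on (simplex_sigma \<sigma>) (\<lambda>y. - (- locmax k (node \<sigma> y)))"
    by (intro continuous_on_minus convex_on_continuous open_simplex) (simp add: concave_on_def)
  then show ?thesis by simp
qed

lemma continuous_on_Delta: "continuous_on (simplex_sigma \<sigma>) (Delta K0 K \<sigma>)"
proof -
  have "node_index i \<le> CARD('n)" "node_index i - 1 \<le> CARD('n)" for i
    using node_index_bounds[of i] by auto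
  then have "continuous_on (simplex_sigma \<sigma>)
      (\<lambda>y. \<chi> i. locmax (node_index i) (node \<sigma> y) - locmax (node_index i - 1) (node \<sigma> y))"
    by (intro continuous_on_vec_lambda continuous_on_diff continuous_on_locmax_node)
  then show ?thesis
    using Delta_eq_locmax_differences by (simp cong: continuous_on_cong)
qed

lemma inj_on_Delta: "inj_on (Delta K0 K \<sigma>) (simplex_sigma \<sigma>)"
proof (rule inj_onI)
  fix y y' assume y: "y \<in> simplex_sigma \<sigma>" and y': "y' \<in> simplex_sigma \<sigma>"
    and eq: "Delta K0 K \<sigma> y = Delta K0 K \<sigma> y'"
  define x x' where "x = node \<sigma> y" and "x' = node \<sigma> y'"
  have x: "config x" "config x'" using y y' by (simp_all add: simplex_iff_config x_def x'_def)
  have const: "locmax k x' - locmax k x = locmax 0 x' - locmax 0 x" if "k \<le> CARD('n)" for k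
    using that
  proof (induction k)
    case (Suc k)
    then show ?case
      using Delta_nth[OF y, of "Suc k"] Delta_nth[OF y', of "Suc k"] eq by (simp add: x_def x'_def)
  qed simp
  show "y = y'"
    unfolding vec_eq_iff
  proof
    fix i
    have "x' (node_index i) = x (node_index i)"
      using locmax_increments_const_imp_eq[OF x const] node_index_bounds[of i] by simp
    then show "y $ i = y' $ i"
      using node_nth[OF node_index_bounds] by (simp add: x_def x'_def \<sigma>_node_index)
  qed
qed

lemma limit_in_simplex_if_Delta_bounded:
  assumes y: "\<And>m. y m \<in> simplex_sigma \<sigma>" and lim: "y \<longlonglongrightarrow> l"
    and bdd: "\<And>m. norm (Delta K0 K \<sigma> (y m)) \<le> C"
  shows "l \<in> simplex_sigma \<sigma>"
proof (rule ccontr)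
  assume "l \<notin> simplex_sigma \<sigma>"
  then obtain k where k: "k \<le> CARD('n)" "\<not> node \<sigma> l k < node \<sigma> l (Suc k)"
    by (auto simp: simplex_sigma_def)
  define X where "X m = node \<sigma> (y m)" for m
  have X: "config (X m)" for m using y by (simp add: simplex_iff_config X_def)
  have X_lim: "(\<lambda>m. X m i) \<longlonglongrightarrow> node \<sigma> l i" for i
    unfolding X_def node_def by (auto intro!: tendsto_intros lim)
  have "node \<sigma> l k \<le> node \<sigma> l (Suc k)"
    using weak_config_limit[OF X X_lim] k(1) by (simp add: weak_config_def)
  then have "node \<sigma> l k = node \<sigma> l (Suc k)" using k(2) by simp
  moreover have "\<bar>locmax i (X m) - locmax (i - 1) (X m)\<bar> \<le> C" if "0 < i" "i \<le> CARD('n)" for m i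
    using Delta_nth[OF y, of i m] component_le_norm_cart[of "Delta K0 K \<sigma> (y m)" "\<sigma> i"]
      bdd[of m] that
    by (simp add: X_def)
  ultimately show False
    using locmax_differences_unbounded[OF X X_lim k(1)] by blast
qed

lemma closed_Delta_image: "closed (Delta K0 K \<sigma> ` simplex_sigma \<sigma>)"
  unfolding closed_sequential_limits
proof (intro allI impI, elim conjE)
  fix w d assume w: "\<forall>m. w m \<in> Delta K0 K \<sigma> ` simplex_sigma \<sigma>" and wd: "w \<longlonglongrightarrow> d"
  have "\<forall>m. \<exists>x. x \<in> simplex_sigma \<sigma> \<and> Delta K0 K \<sigma> x = w m"
    using w unfolding image_iff by (metis)
  then have "\<exists>y. \<forall>m. y m \<in> simplex_sigma \<sigma> \<and> Delta K0 K \<sigma> (y m) = w m" by (rule choice)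
  then obtain y where y: "\<forall>m. y m \<in> simplex_sigma \<sigma> \<and> Delta K0 K \<sigma> (y m) = w m" ..
  have "\<forall>m. y m \<in> cbox 0 (\<chi> i. 2*pi)" using y simplex_subset_cbox by blast
  then obtain l r where r: "strict_mono r" and l: "(y \<circ> r) \<longlonglongrightarrow> l"
    using seq_compactE[OF compact_imp_seq_compact[OF compact_cbox]] by blast
  have D: "(\<lambda>m. Delta K0 K \<sigma> ((y \<circ> r) m)) \<longlonglongrightarrow> d"
    using LIMSEQ_subseq_LIMSEQ[OF wd r] y by (simp add: o_def)
  then obtain C where C: "\<And>m. norm (Delta K0 K \<sigma> ((y \<circ> r) m)) \<le> C"
    using convergent_imp_Bseq[OF convergentI[OF D]] unfolding Bseq_def by blast
  have l_in: "l \<in> simplex_sigma \<sigma>"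
    by (rule limit_in_simplex_if_Delta_bounded[OF _ l C]) (use y in simp)
  then have "isCont (Delta K0 K \<sigma>) l"
    using continuous_on_Delta open_simplex continuous_on_eq_continuous_at by blast
  then have "(\<lambda>m. Delta K0 K \<sigma> ((y \<circ> r) m)) \<longlonglongrightarrow> Delta K0 K \<sigma> l"
    using l by (rule isCont_tendsto_compose)
  with D show "d \<in> Delta K0 K \<sigma> ` simplex_sigma \<sigma>"
    using LIMSEQ_unique l_in by blast
qed

end

theorem corollary9p3:
  fixes K0 :: "real \<Rightarrow> ereal" and K :: "'n::finite \<Rightarrow> real \<Rightarrow> ereal"
    and \<sigma> :: "nat \<Rightarrow> 'n"
  assumes std: "standing_kernel K0" "\<And>j. standing_kernel (K j)"
    and C2: "kernel_C2_neg K0" "\<And>j. kernel_C2_neg (K j)"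
    and inf0: "K0 0 = -\<infinity>" "(K0 \<longlongrightarrow> -\<infinity>) (at_right 0)" "(K0 \<longlongrightarrow> -\<infinity>) (at_left (2*pi))"
    and infj: "\<And>j. K j 0 = -\<infinity>" "\<And>j. (K j \<longlongrightarrow> -\<infinity>) (at_right 0)"
              "\<And>j. (K j \<longlongrightarrow> -\<infinity>) (at_left (2*pi))"
    and perm: "bij_betw \<sigma> {1..CARD('n)} (UNIV :: 'n set)"
  shows "\<exists>g. homeomorphism (simplex_sigma \<sigma>) (UNIV :: (real^'n) set) (Delta K0 K \<sigma>) g"
proof -
  have "singular_kernel K0" "\<And>j. singular_kernel (K j)"
    by (simp_all add: singular_kernel_def std C2 inf0 infj)
  with perm interpret circle_kernels K0 K \<sigma> by unfold_locales
  let ?S = "simplex_sigma \<sigma>" and ?D = "Delta K0 K \<sigma>"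
  have "open (?D ` ?S)"
    by (rule invariance_of_domain[OF continuous_on_Delta open_simplex inj_on_Delta])
  then have "?D ` ?S = UNIV"
    using clopen[of "?D ` ?S"] closed_Delta_image simplex_nonempty by simp
  moreover obtain g where "homeomorphism ?S (?D ` ?S) ?D g"
    using invariance_of_domain_homeomorphism[OF open_simplex continuous_on_Delta _ inj_on_Delta]
    by blast
  ultimately show ?thesis by metis
qed

end
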